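(* Let $\mathbb{P}\in\triangle(\mathcal{X}\times[L])$ with marginal $\mathbb{P}_{\rm x}$ and Bayes class-posterior $\eta^\star$, let $h,h^{(\mathrm{e})}\colon\mathcal{X}\to\mathbb{R}^L$, $s\colon\mathcal{X}\to\mathbb{R}$, and $\gamma,\gamma^{(\mathrm{e})}>0$. Suppose $0\le\ell\le B$ and the partial losses satisfy $\phi_{+1}\ge0$, $\phi_{-1}\ge0$. Then $$\frac{e^{-B/\gamma}}{2\gamma^2}\mathbb{E}_{\mathbb{P}_{\rm x}}\!\big[\phi_{+1}(s(\mathsf{X}))V(\mathsf{X})\big]+\frac{e^{-B/\gamma^{(\mathrm{e})}}}{2(\gamma^{(\mathrm{e})})^2}\mathbb{E}_{\mathbb{P}_{\rm x}}\!\big[\phi_{-1}(s(\mathsf{X}))V^{(\mathrm{e})}(\mathsf{X})\big]\le \mathcal{L}_{\mathtt{J}}(s;\gamma,\gamma^{(\mathrm{e})})-\mathcal{L}_{\mathtt{M}}(s;\gamma,\gamma^{(\mathrm{e})})$$ $$\le\frac{1}{2\gamma^2}\mathbb{E}_{\mathbb{P}_{\rm x}}\!\big[\phi_{+1}(s(\mathsf{X}))V(\mathsf{X})\big]+\frac{1}{2(\gamma^{(\mathrm{e})})^2}\mathbb{E}_{\mathbb{P}_{\rm x}}\!\big[\phi_{-1}(s(\mathsf{X}))V^{(\mathrm{e})}(\mathsf{X})\big],$$ where $V(x)=\mathrm{Var}_{\mathsf{Y}\sim\eta^\star(x)}[\ell(x,\mathsf{Y},h(x))]$ and $V^{(\m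athrm{e})}(x)=\mathrm{Var}_{\mathsf{Y}\sim\eta^\star(x)}[\ell(x,\mathsf{Y},h^{(\mathrm{e})}(x))]$.
   Context: For $\mathtt{I}\in\{\mathtt{M},\mathtt{J}\}$, $\mathcal{L}_{\mathtt{I}}(s;\gamma,\gamma^{(\mathrm{e})})=\mathbb{E}_{\mathsf{X}\sim\mathbb{P}_{\rm x}}[\tilde w_{\mathtt{I}}(\mathsf{X};\gamma)\,\phi_{+1}(s(\mathsf{X}))+\tilde w^{(\mathrm{e})}_{\mathtt{I}}(\mathsf{X};\gamma^{(\mathrm{e})})\,\phi_{-1}(s(\mathsf{X}))]$, where $\tilde w_{\mathtt{M}}(x;\gamma)=\exp(-\mathbb{E}_{\mathsf{Y}\sim\eta^\star(x)}[\ell(x,\mathsf{Y},h(x))]/\gamma)$, $\tilde w_{\mathtt{J}}(x;\gamma)=\mathbb{E}_{\mathsf{Y}\sim\eta^\star(x)}[\exp(-\ell(x,\mathsf{Y},h(x))/\gamma)]$, and $\tilde w^{(\mathrm{e})}_{\mathtt{I}}$ is defined identically with $h$ replaced by $h^{(\mathrm{e})}$. Here $\ell\colon\mathcal{X}\times[L]\times\mathbb{R}^L\to\mathbb{R}$ is a loss and $\phi_{\pm1}\colon\mathbb{R}\to\mathbb{R}$ are partial losses of a binary loss. *)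

theory Defs
  imports "HOL-Probability.Probability"
begin

(* Labels [L] are the elements of a finite type 'L; scores h(x) \<in> \<real>^L are real^'L.
   eta x :: 'L pmf is the Bayes class-posterior at x; Px is the marginal on X. *)

definition wM :: "('x \<Rightarrow> 'L pmf) \<Rightarrow> ('x \<Rightarrow> 'L \<Rightarrow> real^'L \<Rightarrow> real)
                   \<Rightarrow> ('x \<Rightarrow> real^'L) \<Rightarrow> real \<Rightarrow> 'x \<Rightarrow> real" where
  "wM eta loss h \<gamma> x = exp (- measure_pmf.expectation (eta x) (\<lambda>y. loss x y (h x)) / \<gamma>)"

definition wJ :: "('x \<Rightarrow> 'L pmf) \<Rightarrow> ('x \<Rightarrow> 'L \<Rightarrow> real^'L \<Rightarrow> real)
                   \<Rightarrow> ('x \<Rightarrow> real^'L) \<Rightarrow> real \<Rightarrow> 'x \<Rightarrow> real" where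
  "wJ eta loss h \<gamma> x = measure_pmf.expectation (eta x) (\<lambda>y. exp (- loss x y (h x) / \<gamma>))"

definition surr_loss where
  "surr_loss w Px eta loss h he \<phi>p \<phi>m s \<gamma> \<gamma>e =
     (\<integral>x. w eta loss h \<gamma> x * \<phi>p (s x) + w eta loss he \<gamma>e x * \<phi>m (s x) \<partial>Px)"

definition LM :: "'x measure \<Rightarrow> ('x \<Rightarrow> 'L pmf) \<Rightarrow> ('x \<Rightarrow> 'L \<Rightarrow> real^'L \<Rightarrow> real)
     \<Rightarrow> ('x \<Rightarrow> real^'L) \<Rightarrow> ('x \<Rightarrow> real^'L) \<Rightarrow> (real \<Rightarrow> real) \<Rightarrow> (real \<Rightarrow> real)
     \<Rightarrow> ('x \<Rightarrow> real) \<Rightarrow> real \<Rightarrow> real \<Rightarrow> real" where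
  "LM = surr_loss wM"

definition LJ :: "'x measure \<Rightarrow> ('x \<Rightarrow> 'L pmf) \<Rightarrow> ('x \<Rightarrow> 'L \<Rightarrow> real^'L \<Rightarrow> real)
     \<Rightarrow> ('x \<Rightarrow> real^'L) \<Rightarrow> ('x \<Rightarrow> real^'L) \<Rightarrow> (real \<Rightarrow> real) \<Rightarrow> (real \<Rightarrow> real)
     \<Rightarrow> ('x \<Rightarrow> real) \<Rightarrow> real \<Rightarrow> real \<Rightarrow> real" where
  "LJ = surr_loss wJ"

definition Vloss :: "('x \<Rightarrow> 'L pmf) \<Rightarrow> ('x \<Rightarrow> 'L \<Rightarrow> real^'L \<Rightarrow> real)
                   \<Rightarrow> ('x \<Rightarrow> real^'L) \<Rightarrow> 'x \<Rightarrow> real" where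
  "Vloss eta loss h x = measure_pmf.variance (eta x) (\<lambda>y. loss x y (h x))"

end

theory Submission imports Defs begin

text \<open>Both weights are exponentials of the scaled loss, taken after resp. before averaging over
  the label, so \<open>wJ - wM\<close> is the Jensen gap of \<open>t \<mapsto> exp (-t)\<close>. Expanding \<open>exp (-Z)\<close> to
  second order around the mean \<open>m = E Z\<close>, the linear term has mean zero and the Lagrange
  remainder \<open>exp (-\<xi>) (Z - m)\<^sup>2 / 2\<close> has \<open>exp (-\<xi>)\<close> between \<open>exp (-B)\<close> and \<open>1\<close>, since
  \<open>\<xi>\<close> lies in \<open>[0, B]\<close>. Taking expectations sandwiches the gap between multiples of the
  variance; multiplying by the nonnegative partial losses and integrating over \<open>x\<close> gives the
  theorem. That last step needs only integrability, so \<open>Px\<close> need not be a probability measure.\<close>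

lemma exp_neg_Taylor_remainder:
  fixes a b :: real
  obtains t where "min a b \<le> t" "t \<le> max a b"
    and "exp (-a) - exp (-b) + exp (-b) * (a - b) = exp (-t) / 2 * (a - b)^2"
proof (cases "a = b")
  case True
  then show ?thesis using that[of a] by simp
next
  case False
  define diff where "diff = (\<lambda>(m::nat) (t::real). (-1)^m * exp (-t))"
  have "\<forall>m t. m < 2 \<and> min a b \<le> t \<and> t \<le> max a b \<longrightarrow> DERIV (diff m) t :> diff (Suc m) t"
    unfolding diff_def by (auto intro!: derivative_eq_intros)
  from Taylor[of 2 diff "diff 0" "min a b" "max a b" b a, OF _ refl this] False
  obtain t where t: "if a < b then a < t \<and> t < b else b < t \<and> t < a"
    and "diff 0 a = (\<Sum>m<2. diff m b / fact m * (a - b)^m) + diff 2 t / fact 2 * (a - b)^2"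
    by auto
  then have "exp (-a) - exp (-b) + exp (-b) * (a - b) = exp (-t) / 2 * (a - b)^2"
    by (simp add: diff_def numeral_2_eq_2 algebra_simps)
  with t show ?thesis using that[of t] by (auto split: if_splits)
qed

lemma exp_neg_Taylor_remainder_bounds:
  fixes a b B :: real
  assumes "0 \<le> a" "a \<le> B" "0 \<le> b" "b \<le> B"
  shows "exp (-B) / 2 * (a - b)^2 \<le> exp (-a) - exp (-b) + exp (-b) * (a - b)"
    and "exp (-a) - exp (-b) + exp (-b) * (a - b) \<le> (a - b)^2 / 2"
proof -
  obtain t where t: "min a b \<le> t" "t \<le> max a b"
    and eq: "exp (-a) - exp (-b) + exp (-b) * (a - b) = exp (-t) / 2 * (a - b)^2"
    by (rule exp_neg_Taylor_remainder)
  have "exp (-B) * (a - b)^2 \<le> exp (-t) * (a - b)^2" "exp (-t) * (a - b)^2 \<le> 1 * (a - b)^2"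
    using t assms by (intro mult_right_mono; simp)+
  then show "exp (-B) / 2 * (a - b)^2 \<le> exp (-a) - exp (-b) + exp (-b) * (a - b)"
    and "exp (-a) - exp (-b) + exp (-b) * (a - b) \<le> (a - b)^2 / 2"
    unfolding eq by simp_all
qed

lemma (in prob_space) expectation_exp_neg_gap_bounds:
  fixes Z :: "'a \<Rightarrow> real" and B :: real
  assumes Z: "Z \<in> borel_measurable M" "\<And>x. x \<in> space M \<Longrightarrow> 0 \<le> Z x"
    "\<And>x. x \<in> space M \<Longrightarrow> Z x \<le> B"
  shows "exp (-B) / 2 * variance Z \<le> expectation (\<lambda>x. exp (- Z x)) - exp (- expectation Z)"
    and "expectation (\<lambda>x. exp (- Z x)) - exp (- expectation Z) \<le> variance Z / 2"
proof -
  define m where "m = expectation Z"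
  define D where "D x = exp (- Z x) - exp (-m) + exp (-m) * (Z x - m)" for x
  have bounded_integrable: "integrable M f"
    if "f \<in> borel_measurable M" "\<And>x. x \<in> space M \<Longrightarrow> \<bar>f x\<bar> \<le> C" for f :: "'a \<Rightarrow> real" and C
    using that by (intro integrable_const_bound[where B = C]) auto
  have int_Z: "integrable M Z"
    using Z by (intro bounded_integrable[of _ B]) auto
  have int_exp: "integrable M (\<lambda>x. exp (- Z x))"
    using Z by (intro bounded_integrable[of _ 1]) auto
  have m_bounds: "0 \<le> m" "m \<le> B"
    using Z int_Z integral_le_const[of Z B] by (auto simp: m_def integral_nonneg_AE)
  have "(Z x - m)^2 \<le> B^2" if "x \<in> space M" for x
    using Z(2,3)[OF that] m_bounds by (auto simp: abs_le_square_iff[symmetric])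
  then have int_sq: "integrable M (\<lambda>x. (Z x - m)^2)"
    using Z by (intro bounded_integrable[of _ "B^2"]) auto
  have D_bounds: "exp (-B) / 2 * (Z x - m)^2 \<le> D x" "D x \<le> (Z x - m)^2 / 2"
    if "x \<in> space M" for x
    unfolding D_def using exp_neg_Taylor_remainder_bounds[OF Z(2,3)[OF that] m_bounds] .
  have "expectation D = expectation (\<lambda>x. exp (- Z x)) - exp (-m) + exp (-m) * (expectation Z - m)"
    unfolding D_def using int_Z int_exp by (simp add: prob_space)
  then have E_D: "expectation D = expectation (\<lambda>x. exp (- Z x)) - exp (- expectation Z)"
    by (simp add: m_def)
  have int_D: "integrable M D"
    unfolding D_def using int_Z int_exp by simp
  have "expectation (\<lambda>x. exp (-B) / 2 * (Z x - m)^2) \<le> expectation D"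
    using D_bounds int_sq int_D by (intro integral_mono) auto
  then show "exp (-B) / 2 * variance Z \<le> expectation (\<lambda>x. exp (- Z x)) - exp (- expectation Z)"
    by (simp add: E_D m_def)
  have "expectation D \<le> expectation (\<lambda>x. (Z x - m)^2 / 2)"
    using D_bounds int_sq int_D by (intro integral_mono) auto
  then show "expectation (\<lambda>x. exp (- Z x)) - exp (- expectation Z) \<le> variance Z / 2"
    by (simp add: E_D m_def)
qed

lemma wJ_minus_wM_bounds:
  fixes eta :: "'x \<Rightarrow> 'L::finite pmf" and loss :: "'x \<Rightarrow> 'L \<Rightarrow> real^'L \<Rightarrow> real"
    and h :: "'x \<Rightarrow> real^'L" and x :: 'x and \<gamma> B :: real
  assumes "\<gamma> > 0" and "\<And>y. 0 \<le> loss x y (h x)" and "\<And>y. loss x y (h x) \<le> B"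
  shows "exp (- B / \<gamma>) / (2 * \<gamma>^2) * Vloss eta loss h x \<le> wJ eta loss h \<gamma> x - wM eta loss h \<gamma> x"
    and "wJ eta loss h \<gamma> x - wM eta loss h \<gamma> x \<le> 1 / (2 * \<gamma>^2) * Vloss eta loss h x"
proof -
  define Z where "Z = (\<lambda>y. loss x y (h x))"
  have "(Z y / \<gamma> - measure_pmf.expectation (eta x) Z / \<gamma>)^2
      = (Z y - measure_pmf.expectation (eta x) Z)^2 / \<gamma>^2" for y
    by (simp add: power_divide diff_divide_distrib[symmetric])
  moreover have "Vloss eta loss h x = measure_pmf.variance (eta x) Z"
    by (simp add: Vloss_def Z_def)
  ultimately have var_scaled:
    "measure_pmf.variance (eta x) (\<lambda>y. Z y / \<gamma>) = Vloss eta loss h x / \<gamma>^2"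
    by simp
  have "0 \<le> Z y / \<gamma>" "Z y / \<gamma> \<le> B / \<gamma>" for y
    using assms by (simp_all add: Z_def divide_right_mono)
  from measure_pmf.expectation_exp_neg_gap_bounds[of "\<lambda>y. Z y / \<gamma>" "eta x" "B / \<gamma>", OF _ this]
  have "exp (- (B / \<gamma>)) / 2 * measure_pmf.variance (eta x) (\<lambda>y. Z y / \<gamma>)
      \<le> measure_pmf.expectation (eta x) (\<lambda>y. exp (- (Z y / \<gamma>)))
        - exp (- measure_pmf.expectation (eta x) (\<lambda>y. Z y / \<gamma>))"
    and "measure_pmf.expectation (eta x) (\<lambda>y. exp (- (Z y / \<gamma>)))
        - exp (- measure_pmf.expectation (eta x) (\<lambda>y. Z y / \<gamma>))
      \<le> measure_pmf.variance (eta x) (\<lambda>y. Z y / \<gamma>) / 2"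
    by simp_all
  then show "exp (- B / \<gamma>) / (2 * \<gamma>^2) * Vloss eta loss h x \<le> wJ eta loss h \<gamma> x - wM eta loss h \<gamma> x"
    and "wJ eta loss h \<gamma> x - wM eta loss h \<gamma> x \<le> 1 / (2 * \<gamma>^2) * Vloss eta loss h x"
    unfolding var_scaled by (simp_all add: wJ_def wM_def Z_def)
qed

lemma integral_wJ_minus_wM_bounds:
  fixes Px :: "'x measure" and eta :: "'x \<Rightarrow> 'L::finite pmf"
    and loss :: "'x \<Rightarrow> 'L \<Rightarrow> real^'L \<Rightarrow> real" and h :: "'x \<Rightarrow> real^'L"
    and \<phi> :: "'x \<Rightarrow> real" and \<gamma> B :: real
  assumes "\<gamma> > 0" and "\<And>x y. 0 \<le> loss x y (h x)" and "\<And>x y. loss x y (h x) \<le> B"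
    and \<phi>_nonneg: "\<And>x. 0 \<le> \<phi> x"
    and int_wM: "integrable Px (\<lambda>x. wM eta loss h \<gamma> x * \<phi> x)"
    and int_wJ: "integrable Px (\<lambda>x. wJ eta loss h \<gamma> x * \<phi> x)"
    and int_V: "integrable Px (\<lambda>x. \<phi> x * Vloss eta loss h x)"
  shows "exp (- B / \<gamma>) / (2 * \<gamma>^2) * (\<integral>x. \<phi> x * Vloss eta loss h x \<partial>Px)
      \<le> (\<integral>x. wJ eta loss h \<gamma> x * \<phi> x \<partial>Px) - (\<integral>x. wM eta loss h \<gamma> x * \<phi> x \<partial>Px)"
    and "(\<integral>x. wJ eta loss h \<gamma> x * \<phi> x \<partial>Px) - (\<integral>x. wM eta loss h \<gamma> x * \<phi> x \<partial>Px)
      \<le> 1 / (2 * \<gamma>^2) * (\<integral>x. \<phi> x * Vloss eta loss h x \<partial>Px)"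
proof -
  define G where "G x = (wJ eta loss h \<gamma> x - wM eta loss h \<gamma> x) * \<phi> x" for x
  have int_G: "integrable Px G"
    unfolding G_def left_diff_distrib using int_wJ int_wM by simp
  have integral_G: "(\<integral>x. G x \<partial>Px)
      = (\<integral>x. wJ eta loss h \<gamma> x * \<phi> x \<partial>Px) - (\<integral>x. wM eta loss h \<gamma> x * \<phi> x \<partial>Px)"
    unfolding G_def left_diff_distrib using int_wJ int_wM by (rule Bochner_Integration.integral_diff)
  have G_bounds: "exp (- B / \<gamma>) / (2 * \<gamma>^2) * (\<phi> x * Vloss eta loss h x) \<le> G x"
    "G x \<le> 1 / (2 * \<gamma>^2) * (\<phi> x * Vloss eta loss h x)" for x
  proof -
    note w_bounds = wJ_minus_wM_bounds[of \<gamma> loss x h B eta, OF assms(1-3)]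
    show "exp (- B / \<gamma>) / (2 * \<gamma>^2) * (\<phi> x * Vloss eta loss h x) \<le> G x"
      "G x \<le> 1 / (2 * \<gamma>^2) * (\<phi> x * Vloss eta loss h x)"
      using mult_right_mono[OF w_bounds(1) \<phi>_nonneg] mult_right_mono[OF w_bounds(2) \<phi>_nonneg]
      unfolding G_def by (simp_all add: ac_simps)
  qed
  have "(\<integral>x. exp (- B / \<gamma>) / (2 * \<gamma>^2) * (\<phi> x * Vloss eta loss h x) \<partial>Px) \<le> (\<integral>x. G x \<partial>Px)"
    using G_bounds int_G int_V by (intro integral_mono) auto
  then show "exp (- B / \<gamma>) / (2 * \<gamma>^2) * (\<integral>x. \<phi> x * Vloss eta loss h x \<partial>Px)
      \<le> (\<integral>x. wJ eta loss h \<gamma> x * \<phi> x \<partial>Px) - (\<integral>x. wM eta loss h \<gamma> x * \<phi> x \<partial>Px)"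
    by (simp add: integral_G)
  have "(\<integral>x. G x \<partial>Px) \<le> (\<integral>x. 1 / (2 * \<gamma>^2) * (\<phi> x * Vloss eta loss h x) \<partial>Px)"
    using G_bounds int_G int_V by (intro integral_mono) auto
  then show "(\<integral>x. wJ eta loss h \<gamma> x * \<phi> x \<partial>Px) - (\<integral>x. wM eta loss h \<gamma> x * \<phi> x \<partial>Px)
      \<le> 1 / (2 * \<gamma>^2) * (\<integral>x. \<phi> x * Vloss eta loss h x \<partial>Px)"
    by (simp add: integral_G)
qed

theorem theorem4:
  fixes Px :: "'x measure" and eta :: "'x \<Rightarrow> 'L::finite pmf"
    and loss :: "'x \<Rightarrow> 'L \<Rightarrow> real^'L \<Rightarrow> real"
    and h he :: "'x \<Rightarrow> real^'L" and s :: "'x \<Rightarrow> real"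
    and \<phi>p \<phi>m :: "real \<Rightarrow> real" and \<gamma> \<gamma>e B :: real
  assumes "prob_space Px"
    and "\<gamma> > 0" and "\<gamma>e > 0"
    and "\<And>x y v. 0 \<le> loss x y v" and "\<And>x y v. loss x y v \<le> B"
    and "\<And>t. 0 \<le> \<phi>p t" and "\<And>t. 0 \<le> \<phi>m t"
    and "integrable Px (\<lambda>x. wM eta loss h \<gamma> x * \<phi>p (s x))"
    and "integrable Px (\<lambda>x. wM eta loss he \<gamma>e x * \<phi>m (s x))"
    and "integrable Px (\<lambda>x. wJ eta loss h \<gamma> x * \<phi>p (s x))"
    and "integrable Px (\<lambda>x. wJ eta loss he \<gamma>e x * \<phi>m (s x))"
    and "integrable Px (\<lambda>x. \<phi>p (s x) * Vloss eta loss h x)"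
    and "integrable Px (\<lambda>x. \<phi>m (s x) * Vloss eta loss he x)"
  shows "exp (- B / \<gamma>) / (2 * \<gamma>^2) * (\<integral>x. \<phi>p (s x) * Vloss eta loss h x \<partial>Px)
         + exp (- B / \<gamma>e) / (2 * \<gamma>e^2) * (\<integral>x. \<phi>m (s x) * Vloss eta loss he x \<partial>Px)
         \<le> LJ Px eta loss h he \<phi>p \<phi>m s \<gamma> \<gamma>e - LM Px eta loss h he \<phi>p \<phi>m s \<gamma> \<gamma>e
       \<and> LJ Px eta loss h he \<phi>p \<phi>m s \<gamma> \<gamma>e - LM Px eta loss h he \<phi>p \<phi>m s \<gamma> \<gamma>e
         \<le> 1 / (2 * \<gamma>^2) * (\<integral>x. \<phi>p (s x) * Vloss eta loss h x \<partial>Px)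
           + 1 / (2 * \<gamma>e^2) * (\<integral>x. \<phi>m (s x) * Vloss eta loss he x \<partial>Px)"
proof -
  have "LJ Px eta loss h he \<phi>p \<phi>m s \<gamma> \<gamma>e - LM Px eta loss h he \<phi>p \<phi>m s \<gamma> \<gamma>e
      = ((\<integral>x. wJ eta loss h \<gamma> x * \<phi>p (s x) \<partial>Px) - (\<integral>x. wM eta loss h \<gamma> x * \<phi>p (s x) \<partial>Px))
        + ((\<integral>x. wJ eta loss he \<gamma>e x * \<phi>m (s x) \<partial>Px) - (\<integral>x. wM eta loss he \<gamma>e x * \<phi>m (s x) \<partial>Px))"
    unfolding LJ_def LM_def surr_loss_def using assms(8-11) by simp
  moreover note
    integral_wJ_minus_wM_bounds[of \<gamma> loss h B "\<lambda>x. \<phi>p (s x)", OF assms(2,4,5,6,8,10,12)]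
    integral_wJ_minus_wM_bounds[of \<gamma>e loss he B "\<lambda>x. \<phi>m (s x)", OF assms(3,4,5,7,9,11,13)]
  ultimately show ?thesis
    by linarith
qed

end
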